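(* Let $A$ be a finite non-empty alphabet. For all non-empty words $\mathbf a,\mathbf b\in A^+$ of equal length, $\mathbf a:\mathbf a^r::\mathbf b:\mathbf b^r$ holds in $(A^+,\cdot,A^+)$. Consequently $\mathbf a:\mathbf a^r::\mathbf a^r:\mathbf a$ for every $\mathbf a\in A^+$.
   Context: $A^+$ is the set of non-empty finite words over $A$; $\mathbf a^r:=a_n\ldots a_1$ is the reverse of $\mathbf a=a_1\ldots a_n$. $(A^+,\cdot,A^+)$ is the algebra with universe $A^+$, concatenation, and every non-empty word as a constant. Terms are built from a denumerable variable set, concatenation and these constants; $X(s)$ is the set of variables of $s$. A justification is a pair $s\to t$ with $X(t)\subseteq X(s)$. $\uparrow(\mathbf a\to\mathbf b)$ is the set of justifications $s\to t$ with $\mathbf a=s(\mathbf o)$, $\mathbf b=t(\mathbf o)$ for some tuple $\mathbf o$ of elements of $A^+$; $\uparrow(\mathbf a\to\mathbf b:\!\cdot\,\mathbf c\to\mathbf d):=\uparrow(\mathbf a\to\mathbf b)\cap\uparrow(\mathbf c\to\mathbf d)$. A justification is trivial if it lies in all sets $\uparrow(\mathbf a'\to\mathbf b':\!\cdot\,\mathbf c'\to\mathbf d')$. $\mathbf a\to\mathbf b:\!\cdot\,\mathbf c\to\mathbf d$ holds iff either (i) all justifications in $\uparrow(\mathbf a\to\mathbf b)\cup\uparrow(\mathbf c\to\mathbf d)$ are trivial, or (ii) $J_{\mathbf d}:=\uparrow(\mathbf a\to\mathbf b:\!\cdot\,\mathbf c\to\mathbf d)$ contains a non-trivial justification and for every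 $\mathbf d'$, $J_{\mathbf d}\subseteq J_{\mathbf d'}$ implies $J_{\mathbf d'}$ contains a non-trivial justification and $J_{\mathbf d'}\subseteq J_{\mathbf d}$ (ignoring trivial justifications). $\mathbf a:\mathbf b::\mathbf c:\mathbf d$ iff $\mathbf a\to\mathbf b:\!\cdot\,\mathbf c\to\mathbf d$, $\mathbf b\to\mathbf a:\!\cdot\,\mathbf d\to\mathbf c$, $\mathbf c\to\mathbf d:\!\cdot\,\mathbf a\to\mathbf b$, $\mathbf d\to\mathbf c:\!\cdot\,\mathbf b\to\mathbf a$ all hold. *)

theory Defs
  imports Main
begin

text \<open>Words over the alphabet 'a are lists; A^+ is the set of non-empty lists.
  The alphabet is the (finite, non-empty) type 'a.  Terms of the algebra
  (A^+, concatenation, A^+) over the denumerable variable set nat.\<close>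

datatype 'a wterm = Var nat | Const "'a list" | Cat "'a wterm" "'a wterm"

fun wf_term :: "'a wterm \<Rightarrow> bool" where
  "wf_term (Var x) = True"
| "wf_term (Const w) = (w \<noteq> [])"
| "wf_term (Cat s t) = (wf_term s \<and> wf_term t)"

fun vars :: "'a wterm \<Rightarrow> nat set" where
  "vars (Var x) = {x}"
| "vars (Const w) = {}"
| "vars (Cat s t) = vars s \<union> vars t"

fun eval :: "(nat \<Rightarrow> 'a list) \<Rightarrow> 'a wterm \<Rightarrow> 'a list" where
  "eval \<sigma> (Var x) = \<sigma> x"
| "eval \<sigma> (Const w) = w"
| "eval \<sigma> (Cat s t) = eval \<sigma> s @ eval \<sigma> t"

definition is_justification :: "'a wterm \<Rightarrow> 'a wterm \<Rightarrow> bool" where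
  "is_justification s t \<longleftrightarrow> wf_term s \<and> wf_term t \<and> vars t \<subseteq> vars s"

definition up :: "'a list \<Rightarrow> 'a list \<Rightarrow> ('a wterm \<times> 'a wterm) set" where
  "up a b = {(s, t). is_justification s t \<and>
      (\<exists>\<sigma>. (\<forall>x. \<sigma> x \<noteq> []) \<and> eval \<sigma> s = a \<and> eval \<sigma> t = b)}"

definition up2 :: "'a list \<Rightarrow> 'a list \<Rightarrow> 'a list \<Rightarrow> 'a list \<Rightarrow> ('a wterm \<times> 'a wterm) set" where
  "up2 a b c d = up a b \<inter> up c d"

definition trivial :: "('a wterm \<times> 'a wterm) \<Rightarrow> bool" where
  "trivial j \<longleftrightarrow> (\<forall>a' b' c' d'. a' \<noteq> [] \<and> b' \<noteq> [] \<and> c' \<noteq> [] \<and> d' \<noteq> [] \<longrightarrow>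
                    j \<in> up2 a' b' c' d')"

definition nontriv :: "('a wterm \<times> 'a wterm) set \<Rightarrow> ('a wterm \<times> 'a wterm) set" where
  "nontriv J = {j \<in> J. \<not> trivial j}"

definition arrow_prop :: "'a list \<Rightarrow> 'a list \<Rightarrow> 'a list \<Rightarrow> 'a list \<Rightarrow> bool" where
  "arrow_prop a b c d \<longleftrightarrow>
     (\<forall>j \<in> up a b \<union> up c d. trivial j) \<or>
     (nontriv (up2 a b c d) \<noteq> {} \<and>
      (\<forall>d'. d' \<noteq> [] \<longrightarrow> nontriv (up2 a b c d) \<subseteq> nontriv (up2 a b c d') \<longrightarrow>
            nontriv (up2 a b c d') \<noteq> {} \<and> nontriv (up2 a b c d') \<subseteq> nontriv (up2 a b c d)))"

definition analogy :: "'a list \<Rightarrow> 'a list \<Rightarrow> 'a list \<Rightarrow> 'a list \<Rightarrow> bool" where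
  "analogy a b c d \<longleftrightarrow> arrow_prop a b c d \<and> arrow_prop b a d c \<and>
                       arrow_prop c d a b \<and> arrow_prop d c b a"

end

theory Submission
  imports Defs
begin

text \<open>The justification \<open>x\<^sub>1 \<dots> x\<^sub>n \<rightarrow> x\<^sub>n \<dots> x\<^sub>1\<close> with \<open>n = |a|\<close> lies in
  \<open>\<up>(a \<rightarrow> a\<^sup>r)\<close> (substitute the letters of \<open>a\<close>) and in \<open>\<up>(b \<rightarrow> b\<^sup>r)\<close> whenever
  \<open>|b| = |a|\<close>. It is non-trivial because it preserves length. Conversely, if it lies in
  \<open>\<up>(b \<rightarrow> d)\<close> then, as the \<open>n\<close> non-empty values of the variables concatenate to a word of
  length \<open>n\<close>, each value is a single letter and \<open>d = b\<^sup>r\<close>. So every \<open>d'\<close> with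
  \<open>J\<^sub>d \<subseteq> J\<^sub>d\<^sub>'\<close> equals \<open>d\<close>, which makes all four directions of the analogy hold.\<close>

fun var_word :: "nat list \<Rightarrow> 'a wterm" where
  "var_word [x] = Var x"
| "var_word (x # y # xs) = Cat (Var x) (var_word (y # xs))"

lemma eval_var_word: "xs \<noteq> [] \<Longrightarrow> eval \<sigma> (var_word xs) = concat (map \<sigma> xs)"
  by (induction xs rule: var_word.induct) auto

lemma vars_var_word: "xs \<noteq> [] \<Longrightarrow> vars (var_word xs) = set xs"
  by (induction xs rule: var_word.induct) auto

lemma wf_term_var_word: "xs \<noteq> [] \<Longrightarrow> wf_term (var_word xs)"
  by (induction xs rule: var_word.induct) auto

definition rev_justification :: "nat \<Rightarrow> 'a wterm \<times> 'a wterm" where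
  "rev_justification n = (var_word [0..<n], var_word (rev [0..<n]))"

lemma length_le_length_concat:
  "\<forall>xs \<in> set xss. xs \<noteq> [] \<Longrightarrow> length xss \<le> length (concat xss)"
proof (induction xss)
  case (Cons xs xss)
  then show ?case by (cases xs) auto
qed simp

lemma length_concat_eq_length_imp_singletons:
  assumes "\<forall>xs \<in> set xss. xs \<noteq> []" and "length (concat xss) = length xss"
  shows "\<forall>xs \<in> set xss. length xs = 1"
  using assms
proof (induction xss)
  case (Cons xs xss)
  have "length xss \<le> length (concat xss)" and "1 \<le> length xs"
    using Cons.prems(1) length_le_length_concat by (auto simp: Suc_le_eq)
  moreover have "length xs + length (concat xss) = Suc (length xss)"
    using Cons.prems(2) by simp
  ultimately have "length xs = 1" and "length (concat xss) = length xss"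
    by linarith+
  with Cons show ?case by simp
qed simp

lemma rev_concat_singletons:
  assumes "\<forall>xs \<in> set xss. length xs = 1"
  shows "rev (concat xss) = concat (rev xss)"
proof -
  have "map rev xss = xss"
    using assms by (intro map_idI) (auto simp: length_Suc_conv)
  then show ?thesis by (simp add: rev_concat rev_map[symmetric])
qed

lemma not_trivial_if_length_preserving:
  assumes "\<And>\<sigma>. length (eval \<sigma> s) = length (eval \<sigma> t)"
  shows "\<not> trivial (s, t :: 'a wterm)"
proof
  assume "trivial (s, t)"
  then have "(s, t) \<in> up [undefined :: 'a] [undefined, undefined]"
    unfolding trivial_def up2_def by blast
  then obtain \<sigma> :: "nat \<Rightarrow> 'a list"
    where "eval \<sigma> s = [undefined]" and "eval \<sigma> t = [undefined, undefined]"
    unfolding up_def by auto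
  with assms[of \<sigma>] show False by simp
qed

lemma not_trivial_rev_justification:
  "0 < n \<Longrightarrow> \<not> trivial (rev_justification n :: 'a wterm \<times> 'a wterm)"
  unfolding rev_justification_def
  by (rule not_trivial_if_length_preserving) (simp add: eval_var_word rev_map[symmetric])

lemma rev_justification_mem_up:
  assumes "u \<noteq> []"
  shows "rev_justification (length u) \<in> up u (rev u)"
proof -
  define \<sigma> where "\<sigma> = (\<lambda>i. [u ! i])"
  have "eval \<sigma> (var_word [0..<length u]) = u"
    using assms by (simp add: eval_var_word \<sigma>_def map_nth)
  moreover have "eval \<sigma> (var_word (rev [0..<length u])) = rev u"
    using assms by (simp add: eval_var_word \<sigma>_def) (simp add: rev_map[symmetric] map_nth)
  ultimately show ?thesis
    using assms unfolding up_def is_justification_def rev_justification_def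
    by (auto simp: wf_term_var_word vars_var_word \<sigma>_def)
qed

lemma rev_justification_mem_up_imp:
  assumes "v \<noteq> []" and "rev_justification (length v) \<in> up v d"
  shows "d = rev v"
proof -
  obtain \<sigma> where nonempty: "\<forall>x. \<sigma> x \<noteq> []"
    and v: "concat (map \<sigma> [0..<length v]) = v"
    and d: "concat (rev (map \<sigma> [0..<length v])) = d"
    using assms unfolding up_def rev_justification_def
    by (auto simp: eval_var_word rev_map)
  have "\<forall>xs \<in> set (map \<sigma> [0..<length v]). length xs = 1"
    using nonempty v by (intro length_concat_eq_length_imp_singletons) auto
  then show ?thesis
    using v d by (simp flip: rev_concat_singletons)
qed

lemma arrow_prop_if_determining:
  assumes "j \<in> nontriv (up2 a b c d)"
    and "\<And>d'. d' \<noteq> [] \<Longrightarrow> j \<in> up c d' \<Longrightarrow> d' = d"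
  shows "arrow_prop a b c d"
  unfolding arrow_prop_def
proof (intro disjI2 conjI allI impI)
  show "nontriv (up2 a b c d) \<noteq> {}" using assms(1) by blast
  fix d' assume "d' \<noteq> []" and "nontriv (up2 a b c d) \<subseteq> nontriv (up2 a b c d')"
  then have "d' = d"
    using assms unfolding nontriv_def up2_def by blast
  then show "nontriv (up2 a b c d') \<noteq> {}"
    and "nontriv (up2 a b c d') \<subseteq> nontriv (up2 a b c d)"
    using assms(1) by blast+
qed

lemma arrow_prop_rev:
  assumes "u \<noteq> []" and "length u = length v"
  shows "arrow_prop u (rev u) v (rev v)"
proof (rule arrow_prop_if_determining)
  have "v \<noteq> []" using assms by auto
  have "rev_justification (length u) \<in> up u (rev u)"
    using assms(1) by (rule rev_justification_mem_up)
  moreover have "rev_justification (length u) \<in> up v (rev v)"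
    using rev_justification_mem_up[OF \<open>v \<noteq> []\<close>] assms(2) by simp
  moreover have "\<not> trivial (rev_justification (length u) :: 'a wterm \<times> 'a wterm)"
    using assms(1) by (simp add: not_trivial_rev_justification)
  ultimately show "rev_justification (length u) \<in> nontriv (up2 u (rev u) v (rev v))"
    unfolding nontriv_def up2_def by simp
  show "d' = rev v" if "rev_justification (length u) \<in> up v d'" for d'
    using rev_justification_mem_up_imp[OF \<open>v \<noteq> []\<close>] that assms(2) by simp
qed

lemma analogy_rev:
  assumes "a \<noteq> []" and "length a = length b"
  shows "analogy a (rev a) b (rev b)"
proof -
  have "b \<noteq> []" using assms by auto
  then show ?thesis
  using assms arrow_prop_rev[of a b] arrow_prop_rev[of "rev a" "rev b"]
    arrow_prop_rev[of b a] arrow_prop_rev[of "rev b" "rev a"]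
  unfolding analogy_def by auto
qed

theorem mainTheorem15:
  shows "(\<forall>a b :: 'a :: finite list. a \<noteq> [] \<and> b \<noteq> [] \<and> length a = length b \<longrightarrow>
            analogy a (rev a) b (rev b)) \<and>
         (\<forall>a :: 'a list. a \<noteq> [] \<longrightarrow> analogy a (rev a) (rev a) a)"
  using analogy_rev[of a "rev a" for a :: "'a list"] by (auto intro: analogy_rev)

end
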